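(* Let $1\le k\le n-1$. The simplicial complexes $\Delta^{NN}_{k,n}$ and $\Delta^{NC}_{k,n}$ are pure of dimension $k(n-k)$, i.e. all their maximal faces have exactly $k(n-k)+1$ vertices.
   Context: $V_{k,n}$ denotes the set of integer vectors $I=(i_1,\dots,i_k)$ with $1\le i_1<\dots<i_k\le n$. Two arcs $(p<p')$, $(q<q')$ cross if $p<q<p'<q'$ or $q<p<q'<p'$; they nest if $p<q<q'<p'$ or $q<p<p'<q'$. $I,J\in V_{k,n}$ are noncrossing if for all $1\le a<b\le k$ with $i_\ell=j_\ell$ for all $a<\ell<b$, the arcs $(i_a<i_b)$ and $(j_a<j_b)$ do not cross; they are nonnesting if for all $1\le a<b\le k$ these arcs do not nest. The noncrossing complex $\Delta^{NC}_{k,n}$ (resp. nonnesting complex $\Delta^{NN}_{k,n}$) is the flag simplicial complex with vertex set $V_{k,n}$ whose faces are the sets of pairwise noncrossing (resp. pairwise nonnesting) vectors. *)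

theory Defs
  imports Main
begin

text \<open>Vectors I = (i_1 < ... < i_k) with entries in {1..n}, represented as lists
  (0-based positions).\<close>
definition V :: "nat \<Rightarrow> nat \<Rightarrow> nat list set" where
  "V k n = {I. length I = k \<and> sorted_wrt (<) I \<and> set I \<subseteq> {1..n}}"

definition arcs_cross :: "nat \<Rightarrow> nat \<Rightarrow> nat \<Rightarrow> nat \<Rightarrow> bool" where
  "arcs_cross p p' q q' \<longleftrightarrow> (p < q \<and> q < p' \<and> p' < q') \<or> (q < p \<and> p < q' \<and> q' < p')"

definition arcs_nest :: "nat \<Rightarrow> nat \<Rightarrow> nat \<Rightarrow> nat \<Rightarrow> bool" where
  "arcs_nest p p' q q' \<longleftrightarrow> (p < q \<and> q < q' \<and> q' < p') \<or> (q < p \<and> p < p' \<and> p' < q')"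

definition noncrossing :: "nat list \<Rightarrow> nat list \<Rightarrow> bool" where
  "noncrossing I J \<longleftrightarrow>
     (\<forall>a b. a < b \<and> b < length I \<and> (\<forall>l. a < l \<and> l < b \<longrightarrow> I ! l = J ! l)
        \<longrightarrow> \<not> arcs_cross (I ! a) (I ! b) (J ! a) (J ! b))"

definition nonnesting :: "nat list \<Rightarrow> nat list \<Rightarrow> bool" where
  "nonnesting I J \<longleftrightarrow>
     (\<forall>a b. a < b \<and> b < length I \<longrightarrow> \<not> arcs_nest (I ! a) (I ! b) (J ! a) (J ! b))"

definition flag_faces :: "'a set \<Rightarrow> ('a \<Rightarrow> 'a \<Rightarrow> bool) \<Rightarrow> 'a set set" where
  "flag_faces Vs R = {F. F \<subseteq> Vs \<and> (\<forall>x\<in>F. \<forall>y\<in>F. x \<noteq> y \<longrightarrow> R x y)}"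

definition NC_complex :: "nat \<Rightarrow> nat \<Rightarrow> nat list set set" where
  "NC_complex k n = flag_faces (V k n) noncrossing"

definition NN_complex :: "nat \<Rightarrow> nat \<Rightarrow> nat list set set" where
  "NN_complex k n = flag_faces (V k n) nonnesting"

definition maximal_faces :: "'a set set \<Rightarrow> 'a set set" where
  "maximal_faces \<Delta> = {F \<in> \<Delta>. \<forall>G\<in>\<Delta>. F \<subseteq> G \<longrightarrow> G = F}"

end

theory Submission
  imports Defs "HOL-Library.List_Lexorder"
begin

(* A vector of V (k+1) n is a prefix t in V k (n-1) followed by a last entry x.  For a maximal
   face F on V (k+1) n we show, for both compatibility relations:
   (a) the prefixes butlast ` F form a maximal face of the same complex on V k (n-1);
   (b) the elements of F that are not the top element of their prefix (some element of F with
       the same prefix has a larger last entry) have pairwise distinct last entries, and these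
       run through exactly k+1, ..., n-1.
   Counting F by prefixes then gives |F| = |butlast ` F| + (n-k-1), and induction on k, starting
   from k = 1 where every maximal face is the full simplex on n vertices, gives the claim.
   These hypotheses are then verified for noncrossing (using the last position where two
   prefixes differ) and for nonnesting (which means comparability in the componentwise
   order); both arguments pick extremal prefixes in the reverse lexicographic order. *)

lemma V_length: "I \<in> V k n \<Longrightarrow> length I = k"
  by (simp add: V_def)

lemma V_strict_mono: "I \<in> V k n \<Longrightarrow> i < j \<Longrightarrow> j < k \<Longrightarrow> I ! i < I ! j"
  by (auto simp: V_def sorted_wrt_iff_nth_less)

lemma V_entry_range: "I \<in> V k n \<Longrightarrow> i < k \<Longrightarrow> 1 \<le> I ! i \<and> I ! i \<le> n"
  unfolding V_def using nth_mem by fastforce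

lemma V_entry_lower: "I \<in> V k n \<Longrightarrow> i < k \<Longrightarrow> Suc i \<le> I ! i"
proof (induction i)
  case 0
  then show ?case using V_entry_range by fastforce
next
  case (Suc i)
  then have "I ! i < I ! Suc i" using V_strict_mono by auto
  with Suc show ?case by auto
qed

lemma V_below_last:
  assumes "I \<in> V k n" "i < k" "I ! (k - 1) < x"
  shows "I ! i < x"
proof (cases "i = k - 1")
  case False
  then have "I ! i < I ! (k - 1)" using V_strict_mono[OF assms(1)] assms(2) by auto
  then show ?thesis using assms(3) by simp
qed (use assms in simp)

lemma finite_V: "finite (V k n)"
proof -
  have "V k n \<subseteq> {xs. set xs \<subseteq> {1..n} \<and> length xs = k}" by (auto simp: V_def)
  moreover have "finite {xs. set xs \<subseteq> {1..n} \<and> length xs = k}"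
    by (rule finite_lists_length_eq) simp
  ultimately show ?thesis by (rule finite_subset)
qed

lemma V_snocD:
  assumes "t @ [x] \<in> V (Suc m) n"
  shows "t \<in> V m (n - 1)" "\<And>i. i < m \<Longrightarrow> t ! i < x" "1 \<le> x" "x \<le> n"
proof -
  have L: "length t = m" using assms by (simp add: V_def)
  have S: "sorted_wrt (<) (t @ [x])" and E: "set (t @ [x]) \<subseteq> {1..n}"
    using assms by (auto simp: V_def)
  then have lt: "\<And>z. z \<in> set t \<Longrightarrow> z < x" by (auto simp: sorted_wrt_append)
  show "\<And>i. i < m \<Longrightarrow> t ! i < x" using lt L by auto
  show "1 \<le> x" "x \<le> n" using E by auto
  have "set t \<subseteq> {1..n - 1}" using E lt \<open>x \<le> n\<close> by fastforce
  then show "t \<in> V m (n - 1)" using S L by (auto simp: V_def sorted_wrt_append)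
qed

lemma V_snocI:
  assumes "t \<in> V m n'" "\<And>i. i < m \<Longrightarrow> t ! i < x" "1 \<le> x" "x \<le> n"
  shows "t @ [x] \<in> V (Suc m) n"
proof -
  have lt: "\<And>z. z \<in> set t \<Longrightarrow> z < x" using assms(1,2) by (auto simp: V_def in_set_conv_nth)
  moreover have "set t \<subseteq> {1..n}" using lt assms(1,4) by (fastforce simp: V_def)
  ultimately show ?thesis using assms by (auto simp: V_def sorted_wrt_append)
qed

lemma V_butlast_last: "I \<in> V (Suc m) n \<Longrightarrow> I = butlast I @ [last I]"
  by (metis V_length append_butlast_last_id list.size(3) nat.distinct(1))

lemma V_snoc_prefix_length: "t @ [x] \<in> V (Suc m) n \<Longrightarrow> length t = m"
  by (simp add: V_def)

lemma butlast_image_V: "F \<subseteq> V (Suc m) n \<Longrightarrow> butlast ` F \<subseteq> V m (n - 1)"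
  by (metis V_butlast_last V_snocD(1) image_subset_iff subsetD)

lemma flag_faceD:
  assumes "F \<in> flag_faces Vs R"
  shows "F \<subseteq> Vs" "\<And>x y. x \<in> F \<Longrightarrow> y \<in> F \<Longrightarrow> x \<noteq> y \<Longrightarrow> R x y"
  using assms by (auto simp: flag_faces_def)

lemma maximal_faceD: "F \<in> maximal_faces \<Delta> \<Longrightarrow> F \<in> \<Delta>"
  by (simp add: maximal_faces_def)

lemma maximal_face_insert:
  assumes "F \<in> maximal_faces (flag_faces Vs R)" "z \<in> Vs"
    and "\<And>I. I \<in> F \<Longrightarrow> I \<noteq> z \<Longrightarrow> R z I \<and> R I z"
  shows "z \<in> F"
proof -
  have "insert z F \<in> flag_faces Vs R"
    using assms by (auto simp: maximal_faces_def flag_faces_def)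
  then have "insert z F = F" using assms(1) by (auto simp: maximal_faces_def)
  then show ?thesis by auto
qed

lemma finite_obtain_max:
  fixes f :: "'a \<Rightarrow> 'b::linorder"
  assumes "finite A" "a \<in> A"
  obtains x where "x \<in> A" "\<And>y. y \<in> A \<Longrightarrow> f y \<le> f x"
proof -
  have "Max (f ` A) \<in> f ` A" using assms by (intro Max_in) auto
  then obtain x where "x \<in> A" "f x = Max (f ` A)" by auto
  then show ?thesis using that Max_ge[of "f ` A"] assms by (metis finite_imageI image_eqI)
qed

lemma finite_obtain_min:
  fixes f :: "'a \<Rightarrow> 'b::linorder"
  assumes "finite A" "a \<in> A"
  obtains x where "x \<in> A" "\<And>y. y \<in> A \<Longrightarrow> f x \<le> f y"
proof -
  have "Min (f ` A) \<in> f ` A" using assms by (intro Min_in) auto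
  then obtain x where "x \<in> A" "f x = Min (f ` A)" by auto
  then show ?thesis using that Min_le[of "f ` A"] assms by (metis finite_imageI image_eqI)
qed

subsection \<open>Counting a set of vectors by its prefixes\<close>

definition exceeded :: "nat list set \<Rightarrow> nat list set" where
  "exceeded F = {I \<in> F. \<exists>x'. butlast I @ [x'] \<in> F \<and> last I < x'}"

(* Each prefix has exactly one element that is not exceeded: the one with the largest last entry. *)
lemma bij_betw_butlast_not_exceeded:
  assumes FV: "F \<subseteq> V (Suc m) n" and fin: "finite F"
  shows "bij_betw butlast (F - exceeded F) (butlast ` F)"
  unfolding bij_betw_def
proof
  have dec: "\<And>I. I \<in> F \<Longrightarrow> I = butlast I @ [last I]" using FV V_butlast_last by blast
  show "inj_on butlast (F - exceeded F)"
  proof (rule inj_onI)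
    fix I J assume I: "I \<in> F - exceeded F" and J: "J \<in> F - exceeded F"
      and e: "butlast I = butlast J"
    have "\<not> last I < last J" using I J e dec[of J] by (auto simp: exceeded_def)
    moreover have "\<not> last J < last I" using I J e dec[of I] by (auto simp: exceeded_def)
    ultimately show "I = J" using dec[of I] dec[of J] I J e by auto
  qed
  show "butlast ` (F - exceeded F) = butlast ` F"
  proof
    show "butlast ` F \<subseteq> butlast ` (F - exceeded F)"
    proof
      fix t assume "t \<in> butlast ` F"
      then obtain I where I: "I \<in> F" "t = butlast I" by auto
      define X where "X = {x. t @ [x] \<in> F}"
      have "X \<subseteq> last ` F" unfolding X_def by force
      then have fX: "finite X" using fin finite_surj by blast
      have "last I \<in> X" using I dec[of I] by (auto simp: X_def)
      then have MX: "Max X \<in> X" using fX Max_in by blast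
      have "t @ [Max X] \<notin> exceeded F"
      proof
        assume "t @ [Max X] \<in> exceeded F"
        then obtain a where "a \<in> X" "Max X < a" by (auto simp: exceeded_def X_def)
        then show False using fX Max_ge[of X a] by linarith
      qed
      then show "t \<in> butlast ` (F - exceeded F)" using MX by (force simp: X_def)
    qed
  qed auto
qed

lemma bij_betw_last_exceeded:
  assumes FV: "F \<subseteq> V (Suc m) n"
    and inj: "\<And>t x x' s y'. t @ [x] \<in> F \<Longrightarrow> t @ [x'] \<in> F \<Longrightarrow> x < x' \<Longrightarrow>
               s @ [x] \<in> F \<Longrightarrow> s @ [y'] \<in> F \<Longrightarrow> x < y' \<Longrightarrow> t = s"
    and cov: "\<And>x. Suc m \<le> x \<Longrightarrow> x \<le> n - 1 \<Longrightarrow> \<exists>t x'. t @ [x] \<in> F \<and> t @ [x'] \<in> F \<and> x < x'"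
  shows "bij_betw last (exceeded F) {Suc m..n - 1}"
  unfolding bij_betw_def
proof
  have dec: "\<And>I. I \<in> F \<Longrightarrow> I = butlast I @ [last I]" using FV V_butlast_last by blast
  show "inj_on last (exceeded F)"
  proof (rule inj_onI)
    fix I J assume I: "I \<in> exceeded F" and J: "J \<in> exceeded F" and e: "last I = last J"
    from I obtain a where a: "butlast I @ [a] \<in> F" "last I < a" by (auto simp: exceeded_def)
    from J obtain b where b: "butlast J @ [b] \<in> F" "last J < b" by (auto simp: exceeded_def)
    have "butlast I @ [last I] \<in> F" "butlast J @ [last I] \<in> F"
      using I J dec[of I] dec[of J] e by (auto simp: exceeded_def)
    then have "butlast I = butlast J" using inj a b e by metis
    then show "I = J" using dec[of I] dec[of J] I J e by (auto simp: exceeded_def)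
  qed
  show "last ` exceeded F = {Suc m..n - 1}"
  proof
    show "last ` exceeded F \<subseteq> {Suc m..n - 1}"
    proof
      fix z assume "z \<in> last ` exceeded F"
      then obtain I a where I: "I \<in> F" "z = last I" "butlast I @ [a] \<in> F" "last I < a"
        by (auto simp: exceeded_def)
      have IV: "I \<in> V (Suc m) n" using I FV by auto
      have "last I = I ! m" using IV V_length
        by (metis diff_Suc_1 last_conv_nth list.size(3) nat.distinct(1))
      then have "Suc m \<le> last I" using V_entry_lower[OF IV, of m] by simp
      moreover have "a \<le> n" using V_snocD(4) I FV by blast
      ultimately show "z \<in> {Suc m..n - 1}" using I by auto
    qed
    show "{Suc m..n - 1} \<subseteq> last ` exceeded F"
    proof
      fix x assume "x \<in> {Suc m..n - 1}"
      then have "Suc m \<le> x" "x \<le> n - 1" by auto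
      then obtain t x' where "t @ [x] \<in> F" "t @ [x'] \<in> F" "x < x'" using cov by blast
      then have "t @ [x] \<in> exceeded F" by (auto simp: exceeded_def)
      then show "x \<in> last ` exceeded F" by force
    qed
  qed
qed

lemma card_by_prefixes:
  assumes FV: "F \<subseteq> V (Suc m) n" and fin: "finite F"
    and inj: "\<And>t x x' s y'. t @ [x] \<in> F \<Longrightarrow> t @ [x'] \<in> F \<Longrightarrow> x < x' \<Longrightarrow>
               s @ [x] \<in> F \<Longrightarrow> s @ [y'] \<in> F \<Longrightarrow> x < y' \<Longrightarrow> t = s"
    and cov: "\<And>x. Suc m \<le> x \<Longrightarrow> x \<le> n - 1 \<Longrightarrow> \<exists>t x'. t @ [x] \<in> F \<and> t @ [x'] \<in> F \<and> x < x'"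
  shows "card F = card (butlast ` F) + (n - Suc m)"
proof -
  have "card (exceeded F) = n - Suc m"
    using bij_betw_same_card[OF bij_betw_last_exceeded[OF FV inj cov]] by simp
  moreover have "card (F - exceeded F) = card (butlast ` F)"
    using bij_betw_same_card[OF bij_betw_butlast_not_exceeded[OF FV fin]] .
  moreover have "card F = card (exceeded F) + card (F - exceeded F)"
    using fin card_Diff_subset[of "exceeded F" F] card_mono[of F "exceeded F"]
    by (simp add: exceeded_def finite_subset)
  ultimately show ?thesis by simp
qed

(* Candidate prefixes witnessing that x is exceeded: all entries below x, with a last entry above
   x in F. Both covering proofs pick an extremal candidate ts and show ts @ [x] \<in> F. *)
definition exceeding_prefixes :: "nat list set \<Rightarrow> nat \<Rightarrow> nat \<Rightarrow> nat list set" where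
  "exceeding_prefixes F m x = {t. length t = m \<and> (\<forall>i<m. t ! i < x) \<and> (\<exists>x'. t @ [x'] \<in> F \<and> x < x')}"

lemma finite_exceeding_prefixes: "finite F \<Longrightarrow> finite (exceeding_prefixes F m x)"
proof -
  assume "finite F"
  moreover have "exceeding_prefixes F m x \<subseteq> butlast ` F" unfolding exceeding_prefixes_def by force
  ultimately show ?thesis using finite_subset by blast
qed

subsection \<open>Purity from deletion of the last entry\<close>

(* Hypotheses on a compatibility relation R under which every maximal face of the flag complex
   of R on V k n has k(n-k)+1 vertices: R is trivial on V 1 n, prefixes of compatible vertices
   are compatible, a vector compatible with all prefixes of a face extends to a vector compatible
   with the whole face, and in maximal faces the exceeded last entries are injective and
   cover k+1..n-1 (cf. card_by_prefixes). *)
locale deletion_complex =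
  fixes R :: "nat list \<Rightarrow> nat list \<Rightarrow> bool"
  assumes compatible_V1: "\<And>n I J. I \<in> V 1 n \<Longrightarrow> J \<in> V 1 n \<Longrightarrow> R I J"
    and compatible_prefixes: "\<And>m n F t x s y. F \<in> flag_faces (V (Suc m) n) R \<Longrightarrow>
      t @ [x] \<in> F \<Longrightarrow> s @ [y] \<in> F \<Longrightarrow> t \<noteq> s \<Longrightarrow> R t s"
    and extend_prefix: "\<And>m n F s. F \<in> flag_faces (V (Suc m) n) R \<Longrightarrow> 0 < m \<Longrightarrow>
      s \<in> V m (n - 1) \<Longrightarrow> s \<notin> butlast ` F \<Longrightarrow> (\<And>t. t \<in> butlast ` F \<Longrightarrow> R s t \<and> R t s) \<Longrightarrow>
      \<exists>y. s @ [y] \<in> V (Suc m) n \<and> (\<forall>I\<in>F. R (s @ [y]) I \<and> R I (s @ [y]))"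
    and exceeded_last_inj: "\<And>m n F t x x' s y'. F \<in> flag_faces (V (Suc m) n) R \<Longrightarrow>
      t @ [x] \<in> F \<Longrightarrow> t @ [x'] \<in> F \<Longrightarrow> x < x' \<Longrightarrow> s @ [x] \<in> F \<Longrightarrow> s @ [y'] \<in> F \<Longrightarrow> x < y' \<Longrightarrow>
      t = s"
    and exceeded_last_cover: "\<And>m n F x. F \<in> maximal_faces (flag_faces (V (Suc m) n) R) \<Longrightarrow>
      0 < m \<Longrightarrow> Suc m \<le> x \<Longrightarrow> x \<le> n - 1 \<Longrightarrow> \<exists>t x'. t @ [x] \<in> F \<and> t @ [x'] \<in> F \<and> x < x'"
begin

lemma prefix_face:
  assumes F: "F \<in> flag_faces (V (Suc m) n) R"
  shows "butlast ` F \<in> flag_faces (V m (n - 1)) R"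
proof -
  have FV: "F \<subseteq> V (Suc m) n" using flag_faceD(1)[OF F] .
  have "R t s" if T: "t \<in> butlast ` F" "s \<in> butlast ` F" and "t \<noteq> s" for t s
  proof -
    obtain I J where "I \<in> F" "t = butlast I" "J \<in> F" "s = butlast J" using T by blast
    then have "t @ [last I] \<in> F" "s @ [last J] \<in> F" using V_butlast_last FV by (metis subsetD)+
    then show "R t s" using compatible_prefixes[OF F] \<open>t \<noteq> s\<close> by blast
  qed
  then show ?thesis using butlast_image_V[OF FV] by (simp add: flag_faces_def)
qed

lemma prefix_face_maximal:
  assumes F: "F \<in> maximal_faces (flag_faces (V (Suc m) n) R)" and m: "0 < m"
  shows "butlast ` F \<in> maximal_faces (flag_faces (V m (n - 1)) R)"
  unfolding maximal_faces_def
proof (intro CollectI conjI ballI impI)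
  have Ff: "F \<in> flag_faces (V (Suc m) n) R" using maximal_faceD[OF F] .
  show "butlast ` F \<in> flag_faces (V m (n - 1)) R" using prefix_face[OF Ff] .
  fix G assume G: "G \<in> flag_faces (V m (n - 1)) R" and TG: "butlast ` F \<subseteq> G"
  show "G = butlast ` F"
  proof (rule ccontr)
    assume "G \<noteq> butlast ` F"
    then obtain s where sG: "s \<in> G" and sT: "s \<notin> butlast ` F" using TG by blast
    have sV: "s \<in> V m (n - 1)" using flag_faceD(1)[OF G] sG by auto
    have "R s t \<and> R t s" if "t \<in> butlast ` F" for t
      using flag_faceD(2)[OF G] sG TG that sT by blast
    then obtain y where y: "s @ [y] \<in> V (Suc m) n" "\<forall>I\<in>F. R (s @ [y]) I \<and> R I (s @ [y])"
      using extend_prefix[OF Ff m sV sT] by blast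
    have "s @ [y] \<in> F" using maximal_face_insert[OF F y(1)] y(2) by blast
    then have "s \<in> butlast ` F" by force
    then show False using sT by simp
  qed
qed

(* For k = 1 all vertices are compatible, so the only maximal face is V 1 n itself. *)
lemma maximal_face_card_1:
  assumes F: "F \<in> maximal_faces (flag_faces (V 1 n) R)"
  shows "finite F \<and> card F = n"
proof -
  have "V 1 n \<in> flag_faces (V 1 n) R" using compatible_V1 by (auto simp: flag_faces_def)
  then have FV: "F = V 1 n" using F flag_faceD(1)[OF maximal_faceD[OF F]]
    by (auto simp: maximal_faces_def)
  have "V 1 n = (\<lambda>x. [x]) ` {1..n}"
    by (auto simp: V_def length_Suc_conv)
  moreover have "card ((\<lambda>x. [x]) ` {1..n}) = n"
    by (subst card_image) (auto simp: inj_on_def)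
  ultimately show ?thesis using FV finite_V by auto
qed

(* Purity, by induction on k: |F| = |butlast ` F| + (n-k) = (k-1)(n-k) + 1 + (n-k). *)
theorem maximal_face_card:
  assumes "1 \<le> k" "k < n" "F \<in> maximal_faces (flag_faces (V k n) R)"
  shows "finite F \<and> card F = k * (n - k) + 1"
  using assms
proof (induction k arbitrary: n F)
  case 0
  then show ?case by simp
next
  case (Suc m)
  show ?case
  proof (cases "m = 0")
    case True
    then show ?thesis using maximal_face_card_1 Suc.prems by auto
  next
    case False
    then have m: "0 < m" by simp
    have F: "F \<in> flag_faces (V (Suc m) n) R" using maximal_faceD[OF Suc.prems(3)] .
    have FV: "F \<subseteq> V (Suc m) n" using flag_faceD(1)[OF F] .
    have fin: "finite F" using finite_subset[OF FV finite_V] .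
    have "card (butlast ` F) = m * (n - 1 - m) + 1"
      using Suc.IH[OF _ _ prefix_face_maximal[OF Suc.prems(3) m]] m Suc.prems(2) by auto
    moreover have "card F = card (butlast ` F) + (n - Suc m)"
      using card_by_prefixes[OF FV fin] exceeded_last_inj[OF F] exceeded_last_cover[OF Suc.prems(3) m]
      by blast
    moreover have "n - 1 - m = n - Suc m" by simp
    ultimately have "card F = Suc m * (n - Suc m) + 1" by simp
    then show ?thesis using fin by simp
  qed
qed

end

subsection \<open>The last position where two vectors differ\<close>

definition last_diff :: "nat list \<Rightarrow> nat list \<Rightarrow> nat" where
  "last_diff t s = Max {i. i < length t \<and> t ! i \<noteq> s ! i}"

lemma last_diff:
  assumes "length t = length s" "t \<noteq> s"
  shows "last_diff t s < length t" "t ! last_diff t s \<noteq> s ! last_diff t s"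
    "\<And>l. last_diff t s < l \<Longrightarrow> l < length t \<Longrightarrow> t ! l = s ! l"
proof -
  let ?D = "{i. i < length t \<and> t ! i \<noteq> s ! i}"
  have "?D \<noteq> {}" using assms nth_equalityI by blast
  then have "last_diff t s \<in> ?D" unfolding last_diff_def by (intro Max_in) auto
  then show "last_diff t s < length t" "t ! last_diff t s \<noteq> s ! last_diff t s" by auto
  fix l assume "last_diff t s < l" "l < length t"
  then show "t ! l = s ! l" unfolding last_diff_def using Max_ge[of ?D l] by fastforce
qed

lemma last_diff_eqI:
  assumes "d < length t" "t ! d \<noteq> s ! d" "\<And>l. d < l \<Longrightarrow> l < length t \<Longrightarrow> t ! l = s ! l"
  shows "last_diff t s = d"
  unfolding last_diff_def
proof (rule Max_eqI)
  show "i \<le> d" if "i \<in> {i. i < length t \<and> t ! i \<noteq> s ! i}" for i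
    using that assms(3) not_le by blast
qed (use assms in auto)

lemma rev_less_at_last_diff:
  assumes L: "length t = m" "length s = m" and d: "d < m" "t ! d < s ! d"
    and agree: "\<And>l. d < l \<Longrightarrow> l < m \<Longrightarrow> t ! l = s ! l"
  shows "rev t < rev s"
proof -
  define i where "i = m - 1 - d"
  have im: "i < m" using d i_def by auto
  have "take i (rev t) = take i (rev s)"
  proof (rule nth_equalityI)
    show "length (take i (rev t)) = length (take i (rev s))" using L by simp
    fix j assume "j < length (take i (rev t))"
    then have j: "j < i" using L im by simp
    then have "rev t ! j = t ! (m - Suc j)" "rev s ! j = s ! (m - Suc j)"
      using L im by (auto simp: rev_nth)
    moreover have "t ! (m - Suc j) = s ! (m - Suc j)" using agree[of "m - Suc j"] j i_def d by auto
    ultimately show "take i (rev t) ! j = take i (rev s) ! j" using j by simp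
  qed
  moreover have "rev t ! i = t ! d" "rev s ! i = s ! d" using L im i_def d by (auto simp: rev_nth)
  ultimately have "(rev t, rev s) \<in> lexord {(u, v). u < v}"
    unfolding lexord_take_index_conv using im L d by auto
  then show ?thesis by (simp add: list_less_def)
qed

lemma last_diff_trans:
  assumes L: "length s = m" "length t = m" "length r = m" and ne: "s \<noteq> t" "s \<noteq> r"
    and ts: "t ! last_diff s t < s ! last_diff s t"
    and sr: "s ! last_diff s r < r ! last_diff s r"
  shows "t \<noteq> r" "t ! last_diff t r < r ! last_diff t r"
    "r ! last_diff t r \<le> max (s ! last_diff s t) (r ! last_diff s r)"
proof -
  define d where "d = last_diff s t"
  define d' where "d' = last_diff s r"
  have d: "d < m" "\<And>l. d < l \<Longrightarrow> l < m \<Longrightarrow> s ! l = t ! l"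
    using last_diff[of s t] L ne d_def by auto
  have d': "d' < m" "\<And>l. d' < l \<Longrightarrow> l < m \<Longrightarrow> s ! l = r ! l"
    using last_diff[of s r] L ne d'_def by auto
  obtain e where e: "e < m" "t ! e < r ! e" "r ! e \<le> max (s ! d) (r ! d')"
    and agree: "\<And>l. e < l \<Longrightarrow> l < m \<Longrightarrow> t ! l = r ! l"
  proof (cases d d' rule: linorder_cases)
    case less
    have "t ! d' = s ! d'" using d(2)[of d'] d'(1) less by simp
    show ?thesis
    proof (rule that[of d'])
      show "t ! d' < r ! d'" using \<open>t ! d' = s ! d'\<close> sr d'_def by simp
      show "\<And>l. d' < l \<Longrightarrow> l < m \<Longrightarrow> t ! l = r ! l" using d(2) d'(2) less by force
    qed (use d'(1) in auto)
  next
    case equal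
    show ?thesis
    proof (rule that[of d])
      show "t ! d < r ! d" using ts sr equal d_def d'_def by simp
      show "\<And>l. d < l \<Longrightarrow> l < m \<Longrightarrow> t ! l = r ! l" using d(2) d'(2) equal by force
    qed (use d(1) equal in auto)
  next
    case greater
    have "r ! d = s ! d" using d'(2)[of d] d(1) greater by simp
    show ?thesis
    proof (rule that[of d])
      show "t ! d < r ! d" using \<open>r ! d = s ! d\<close> ts d_def by simp
      show "\<And>l. d < l \<Longrightarrow> l < m \<Longrightarrow> t ! l = r ! l" using d(2) d'(2) greater by force
    qed (use d(1) \<open>r ! d = s ! d\<close> in auto)
  qed
  then have "last_diff t r = e" using L by (intro last_diff_eqI) auto
  then show "t \<noteq> r" "t ! last_diff t r < r ! last_diff t r"
    "r ! last_diff t r \<le> max (s ! last_diff s t) (r ! last_diff s r)"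
    using e d_def d'_def by auto
qed

lemma V_below_by_agreement:
  assumes sV: "s \<in> V m n'" and "length t = m" "d < m" "s ! d < x" "t ! (m - 1) < x"
    and agree: "\<And>l. d < l \<Longrightarrow> l < m \<Longrightarrow> t ! l = s ! l" and "i < m"
  shows "s ! i < x"
proof -
  have "s ! (m - 1) < x"
  proof (cases "d = m - 1")
    case False
    then show ?thesis using agree[of "m - 1"] assms by simp
  qed (use assms in simp)
  then show ?thesis using V_below_last[OF sV] assms by blast
qed

subsection \<open>The noncrossing complex\<close>

lemma arcs_cross_sym: "arcs_cross p p' q q' = arcs_cross q q' p p'"
  unfolding arcs_cross_def by auto

lemma noncrossing_sym: "length I = length J \<Longrightarrow> noncrossing I J = noncrossing J I"
  unfolding noncrossing_def by (metis arcs_cross_sym)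

lemma noncrossing_snoc:
  assumes "length t = m" "length s = m"
  shows "noncrossing (t @ [x]) (s @ [y]) \<longleftrightarrow> noncrossing t s \<and>
     (\<forall>a<m. (\<forall>l. a < l \<and> l < m \<longrightarrow> t ! l = s ! l) \<longrightarrow> \<not> arcs_cross (t ! a) x (s ! a) y)"
    (is "?lhs \<longleftrightarrow> ?prefix \<and> ?last")
proof
  assume H: ?lhs
  show "?prefix \<and> ?last"
  proof
    show ?prefix unfolding noncrossing_def
    proof (intro allI impI)
      fix a b assume ab: "a < b \<and> b < length t \<and> (\<forall>l. a < l \<and> l < b \<longrightarrow> t ! l = s ! l)"
      then have "\<forall>l. a < l \<and> l < b \<longrightarrow> (t @ [x]) ! l = (s @ [y]) ! l" using assms by (simp add: nth_append)
      then have "\<not> arcs_cross ((t @ [x]) ! a) ((t @ [x]) ! b) ((s @ [y]) ! a) ((s @ [y]) ! b)"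
        using H ab assms unfolding noncrossing_def by auto
      then show "\<not> arcs_cross (t ! a) (t ! b) (s ! a) (s ! b)" using ab assms by (simp add: nth_append)
    qed
    show ?last
    proof (intro allI impI)
      fix a assume a: "a < m" and agree: "\<forall>l. a < l \<and> l < m \<longrightarrow> t ! l = s ! l"
      then have "\<forall>l. a < l \<and> l < m \<longrightarrow> (t @ [x]) ! l = (s @ [y]) ! l" using assms by (simp add: nth_append)
      then have "\<not> arcs_cross ((t @ [x]) ! a) ((t @ [x]) ! m) ((s @ [y]) ! a) ((s @ [y]) ! m)"
        using H a assms unfolding noncrossing_def by auto
      then show "\<not> arcs_cross (t ! a) x (s ! a) y" using a assms by (simp add: nth_append)
    qed
  qed
next
  assume H: "?prefix \<and> ?last"
  show ?lhs unfolding noncrossing_def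
  proof (intro allI impI)
    fix a b
    assume ab: "a < b \<and> b < length (t @ [x]) \<and> (\<forall>l. a < l \<and> l < b \<longrightarrow> (t @ [x]) ! l = (s @ [y]) ! l)"
    then have agree: "\<forall>l. a < l \<and> l < b \<longrightarrow> t ! l = s ! l" using assms by (auto simp: nth_append)
    show "\<not> arcs_cross ((t @ [x]) ! a) ((t @ [x]) ! b) ((s @ [y]) ! a) ((s @ [y]) ! b)"
    proof (cases "b < m")
      case True
      then show ?thesis using H ab agree assms unfolding noncrossing_def by (auto simp: nth_append)
    next
      case False
      then have "b = m" using ab assms by auto
      then show ?thesis using H ab agree assms by (auto simp: nth_append)
    qed
  qed
qed

lemma noncrossing_snoc_last_diff:
  assumes L: "length t = m" "length s = m" and ne: "t \<noteq> s"
  shows "noncrossing (t @ [x]) (s @ [y]) \<longleftrightarrow>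
    noncrossing t s \<and> \<not> arcs_cross (t ! last_diff t s) x (s ! last_diff t s) y"
proof -
  let ?d = "last_diff t s"
  have d: "?d < m" "t ! ?d \<noteq> s ! ?d" "\<And>l. ?d < l \<Longrightarrow> l < m \<Longrightarrow> t ! l = s ! l"
    using last_diff[of t s] L ne by auto
  have "\<not> arcs_cross (t ! a) x (s ! a) y"
    if "a < m" "\<forall>l. a < l \<and> l < m \<longrightarrow> t ! l = s ! l" "\<not> arcs_cross (t ! ?d) x (s ! ?d) y" for a
  proof -
    consider "a < ?d" | "a = ?d" | "?d < a" by linarith
    then show ?thesis
    proof cases
      case 3
      then have "t ! a = s ! a" using d that by auto
      then show ?thesis unfolding arcs_cross_def by auto
    qed (use that d in auto)
  qed
  then show ?thesis using noncrossing_snoc[OF L] d by blast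
qed

lemma noncrossing_snoc_same: "noncrossing (t @ [x]) (t @ [y])"
  using noncrossing_snoc[of t "length t" t x y] by (auto simp: noncrossing_def arcs_cross_def)

lemma nc_face_snoc:
  assumes F: "F \<in> flag_faces (V (Suc m) n) noncrossing"
    and "t @ [x] \<in> F" "s @ [y] \<in> F" "t \<noteq> s"
  shows "noncrossing t s \<and> \<not> arcs_cross (t ! last_diff t s) x (s ! last_diff t s) y"
proof -
  have "length t = m" "length s = m"
    using assms flag_faceD(1)[OF F] V_snoc_prefix_length by blast+
  moreover have "noncrossing (t @ [x]) (s @ [y])" using flag_faceD(2)[OF F assms(2,3)] assms(4) by simp
  ultimately show ?thesis using noncrossing_snoc_last_diff assms(4) by blast
qed

(* The prefixes t, s
   differ last at d; both entries there are below x, and whichever is smaller yields a crossing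
   with the larger last entry of the other prefix. *)
lemma nc_exceeded_last_inj:
  assumes F: "F \<in> flag_faces (V (Suc m) n) noncrossing"
    and tx: "t @ [x] \<in> F" and tx': "t @ [x'] \<in> F" and "x < x'"
    and sx: "s @ [x] \<in> F" and sy: "s @ [y'] \<in> F" and "x < y'"
  shows "t = s"
proof (rule ccontr)
  assume ne: "t \<noteq> s"
  have FV: "F \<subseteq> V (Suc m) n" using flag_faceD(1)[OF F] .
  have L: "length t = m" "length s = m" using tx sx FV V_snoc_prefix_length by blast+
  define d where "d = last_diff t s"
  have d: "d < m" "t ! d \<noteq> s ! d" using last_diff[of t s] L ne d_def by auto
  have "s ! d < x" "t ! d < x" using V_snocD(2) sx tx FV d by blast+
  moreover have "\<not> arcs_cross (t ! d) x (s ! d) y'" "\<not> arcs_cross (t ! d) x' (s ! d) x"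
    using nc_face_snoc[OF F tx sy ne] nc_face_snoc[OF F tx' sx ne] d_def by simp_all
  ultimately show False using d(2) \<open>x < x'\<close> \<open>x < y'\<close> unfolding arcs_cross_def by linarith
qed

(* A last entry z for the prefix s is blocked by F if the arc from s ! d to z would cross the last
   arc of a vertex t @ [x] of F whose prefix lies above s at their last difference d. *)
definition nc_blocked :: "nat list set \<Rightarrow> nat list \<Rightarrow> nat \<Rightarrow> bool" where
  "nc_blocked F s z \<longleftrightarrow> (\<exists>t x. t @ [x] \<in> F \<and> t \<noteq> s \<and>
     s ! last_diff s t < t ! last_diff s t \<and> t ! last_diff s t < z \<and> z < x)"

(* A crossing at the last difference d of s and t either has t above s, so y
   would be blocked, or t below s with x < y; then x is blocked by some r @ [x2], and t @ [x]
   crosses r @ [x2] at the last difference of t and r. *)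
lemma nc_least_unblocked:
  assumes F: "F \<in> flag_faces (V (Suc m) n) noncrossing" and m: "0 < m"
    and sV: "s \<in> V m (n - 1)" and sT: "s \<notin> butlast ` F"
    and comp: "\<And>t. t \<in> butlast ` F \<Longrightarrow> noncrossing s t"
    and y: "\<not> nc_blocked F s y" and below_y: "\<And>z. z < y \<Longrightarrow> \<forall>i<m. s ! i < z \<Longrightarrow> nc_blocked F s z"
    and tx: "t @ [x] \<in> F"
  shows "noncrossing (s @ [y]) (t @ [x])"
proof -
  have FV: "F \<subseteq> V (Suc m) n" using flag_faceD(1)[OF F] .
  have Ls: "length s = m" using V_length[OF sV] .
  have Lt: "length t = m" using tx FV V_snoc_prefix_length by blast
  have st: "s \<noteq> t" using sT tx by force
  define d where "d = last_diff s t"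
  have d: "d < m" "s ! d \<noteq> t ! d" "\<And>l. d < l \<Longrightarrow> l < m \<Longrightarrow> s ! l = t ! l"
    using last_diff[of s t] Ls Lt st d_def by auto
  have "\<not> arcs_cross (s ! d) y (t ! d) x"
  proof
    assume "arcs_cross (s ! d) y (t ! d) x"
    then consider (above) "s ! d < t ! d" "t ! d < y" "y < x"
      | (below) "t ! d < s ! d" "s ! d < x" "x < y"
      unfolding arcs_cross_def by auto
    then show False
    proof cases
      case above
      then have "nc_blocked F s y" unfolding nc_blocked_def using tx st d_def
        by (intro exI[of _ t] exI[of _ x]) simp
      then show False using y by simp
    next
      case below
      have "t ! (m - 1) < x" using V_snocD(2)[of t x m n "m - 1"] tx FV m by auto
      moreover have "\<And>l. d < l \<Longrightarrow> l < m \<Longrightarrow> t ! l = s ! l" by (simp add: d(3))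
      ultimately have "\<forall>i<m. s ! i < x" using V_below_by_agreement[OF sV Lt d(1) below(2)] by blast
      then have "nc_blocked F s x" using below_y below(3) by blast
      then obtain r x2 where r: "r @ [x2] \<in> F" "r \<noteq> s" "s ! last_diff s r < r ! last_diff s r"
        "r ! last_diff s r < x" "x < x2"
        unfolding nc_blocked_def by blast
      have Lr: "length r = m" using r(1) FV V_snoc_prefix_length by blast
      have "t ! last_diff s t < s ! last_diff s t" using below(1) d_def by simp
      note tr = last_diff_trans[OF Ls Lt Lr st r(2)[symmetric] this r(3)]
      have "s ! last_diff s t < x" using below(2) d_def by simp
      then have "r ! last_diff t r < x" using tr(3) r(4) by linarith
      then have "arcs_cross (t ! last_diff t r) x (r ! last_diff t r) x2"
        using tr(2) r(5) unfolding arcs_cross_def by simp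
      then show False using nc_face_snoc[OF F tx r(1) tr(1)] by blast
    qed
  qed
  moreover have "noncrossing s t" using comp tx by force
  ultimately show ?thesis using noncrossing_snoc_last_diff[OF Ls Lt st] d_def by simp
qed

(* Property (a), extension: the least unblocked value above the entries of s exists (n is
   never blocked) and extends s to a vertex compatible with the whole face. *)
lemma nc_extend_prefix:
  assumes F: "F \<in> flag_faces (V (Suc m) n) noncrossing" and m: "0 < m"
    and sV: "s \<in> V m (n - 1)" and sT: "s \<notin> butlast ` F"
    and comp: "\<And>t. t \<in> butlast ` F \<Longrightarrow> noncrossing s t"
  shows "\<exists>y. s @ [y] \<in> V (Suc m) n \<and> (\<forall>I\<in>F. noncrossing (s @ [y]) I \<and> noncrossing I (s @ [y]))"
proof -
  have FV: "F \<subseteq> V (Suc m) n" using flag_faceD(1)[OF F] .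
  define admissible where "admissible z \<longleftrightarrow> (\<forall>i<m. s ! i < z) \<and> \<not> nc_blocked F s z" for z
  have "admissible n"
  proof -
    have "\<forall>i<m. s ! i < n" using V_entry_range[OF sV] m by fastforce
    moreover have "\<not> nc_blocked F s n"
    proof
      assume "nc_blocked F s n"
      then obtain t x where "t @ [x] \<in> F" "n < x" unfolding nc_blocked_def by blast
      then show False using FV V_snocD(4)[of t x m n] by auto
    qed
    ultimately show ?thesis unfolding admissible_def by simp
  qed
  define y where "y = (LEAST z. admissible z)"
  have y: "admissible y" "y \<le> n" "\<And>z. z < y \<Longrightarrow> \<not> admissible z"
    unfolding y_def using \<open>admissible n\<close> LeastI Least_le not_less_Least by blast+
  have sy: "\<And>i. i < m \<Longrightarrow> s ! i < y" using y(1) unfolding admissible_def by blast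
  have syV: "s @ [y] \<in> V (Suc m) n" using V_snocI[OF sV sy _ y(2)] sy[of 0] m by simp
  have unblocked: "\<not> nc_blocked F s y" using y(1) unfolding admissible_def by blast
  have below_y: "\<And>z. z < y \<Longrightarrow> \<forall>i<m. s ! i < z \<Longrightarrow> nc_blocked F s z"
    using y(3) unfolding admissible_def by blast
  have "noncrossing (s @ [y]) I \<and> noncrossing I (s @ [y])" if "I \<in> F" for I
  proof -
    have I: "I = butlast I @ [last I]" "length I = Suc m" using that FV V_butlast_last V_length by blast+
    then have "butlast I @ [last I] \<in> F" using that by simp
    then have "noncrossing (s @ [y]) (butlast I @ [last I])"
      using nc_least_unblocked[OF F m sV sT comp unblocked below_y] by blast
    then have "noncrossing (s @ [y]) I" using I(1) by simp
    moreover have "length (s @ [y]) = length I" using I(2) V_length[OF sV] by simp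
    ultimately show ?thesis using noncrossing_sym by blast
  qed
  then show ?thesis using syV by blast
qed

(* The vertex (1, 2, ..., m, n) crosses no vertex, so it lies in every maximal face. *)
lemma nc_cone_vertex:
  assumes J: "J \<in> V (Suc m) n" and mn: "Suc m \<le> n"
  shows "noncrossing ([1..<Suc m] @ [n]) J"
  unfolding noncrossing_def
proof (intro allI impI)
  let ?c = "[1..<Suc m] @ [n]"
  fix a b assume ab: "a < b \<and> b < length ?c \<and> (\<forall>l. a < l \<and> l < b \<longrightarrow> ?c ! l = J ! l)"
  have cv: "\<And>i. i < m \<Longrightarrow> ?c ! i = Suc i" by (simp add: nth_append del: upt_Suc)
  have cm: "?c ! m = n" by (simp add: nth_append del: upt_Suc)
  have lc: "length ?c = Suc m" by simp
  have am: "a < m" using ab lc by linarith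
  have Ja: "Suc a \<le> J ! a" using V_entry_lower[OF J, of a] am by simp
  have Jb: "J ! b \<le> n" using V_entry_range[OF J, of b] ab lc by simp
  show "\<not> arcs_cross (?c ! a) (?c ! b) (J ! a) (J ! b)"
  proof
    assume cr: "arcs_cross (?c ! a) (?c ! b) (J ! a) (J ! b)"
    have ca: "?c ! a = Suc a" using cv am by simp
    show False
    proof (cases "b = m")
      case True
      then show False using cr ca cm Ja Jb unfolding arcs_cross_def by auto
    next
      case False
      then have bm: "b < m" using ab lc by linarith
      then have cb: "?c ! b = Suc b" using cv by simp
      show False
      proof (cases "b = Suc a")
        case True
        then show False using cr ca cb Ja unfolding arcs_cross_def by auto
      next
        case False
        then have "J ! Suc a = Suc (Suc a)" using ab cv[of "Suc a"] bm by auto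
        moreover have "J ! a < J ! Suc a" using V_strict_mono[OF J, of a "Suc a"] False ab bm by simp
        ultimately show False using cr ca cb Ja unfolding arcs_cross_def by auto
      qed
    qed
  qed
qed

lemma nc_cone_vertex_in_face:
  assumes F: "F \<in> maximal_faces (flag_faces (V (Suc m) n) noncrossing)" and mn: "Suc m \<le> n"
  shows "[1..<Suc m] @ [n] \<in> F"
proof (rule maximal_face_insert[OF F])
  show cV: "[1..<Suc m] @ [n] \<in> V (Suc m) n" using mn unfolding V_def by (auto simp: sorted_wrt_append)
  fix I assume "I \<in> F"
  then have IV: "I \<in> V (Suc m) n" using flag_faceD(1)[OF maximal_faceD[OF F]] by auto
  show "noncrossing ([1..<Suc m] @ [n]) I \<and> noncrossing I ([1..<Suc m] @ [n])"
    using nc_cone_vertex[OF IV mn] noncrossing_sym V_length[OF IV] V_length[OF cV] by metis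
qed

(* A crossing at the last difference d either makes ts @ [x'] cross s @ [y]
   (s below ts at d), or puts s above ts at d with all entries of s below x and y > x, so s would
   be a larger exceeding prefix. *)
lemma nc_max_exceeding_prefix:
  assumes F: "F \<in> flag_faces (V (Suc m) n) noncrossing" and m: "0 < m"
    and tsC: "ts \<in> exceeding_prefixes F m x"
    and tsmax: "\<And>s. s \<in> exceeding_prefixes F m x \<Longrightarrow> rev s \<le> rev ts"
    and sy: "s @ [y] \<in> F"
  shows "noncrossing (ts @ [x]) (s @ [y])"
proof (cases "s = ts")
  case True
  then show ?thesis using noncrossing_snoc_same by simp
next
  case False
  then have ne: "ts \<noteq> s" by simp
  have FV: "F \<subseteq> V (Suc m) n" using flag_faceD(1)[OF F] .
  obtain x' where tsx': "ts @ [x'] \<in> F" "x < x'" and tsx: "\<forall>i<m. ts ! i < x" and Lts: "length ts = m"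
    using tsC unfolding exceeding_prefixes_def by blast
  have sV: "s \<in> V m (n - 1)" using V_snocD(1) sy FV by blast
  have Ls: "length s = m" using V_length[OF sV] .
  define d where "d = last_diff ts s"
  have d: "d < m" "\<And>l. d < l \<Longrightarrow> l < m \<Longrightarrow> ts ! l = s ! l"
    using last_diff[of ts s] Ls Lts ne d_def by auto
  have P: "noncrossing ts s \<and> \<not> arcs_cross (ts ! d) x' (s ! d) y"
    using nc_face_snoc[OF F tsx'(1) sy ne] d_def by simp
  have "\<not> arcs_cross (ts ! d) x (s ! d) y"
  proof
    assume "arcs_cross (ts ! d) x (s ! d) y"
    then consider (above) "ts ! d < s ! d" "s ! d < x" "x < y"
      | (below) "s ! d < ts ! d" "ts ! d < y" "y < x"
      unfolding arcs_cross_def by auto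
    then show False
    proof cases
      case below
      then show False using P tsx'(2) unfolding arcs_cross_def by auto
    next
      case above
      have "\<forall>i<m. s ! i < x" using V_below_by_agreement[OF sV Lts d(1) above(2)] tsx m d(2) by simp
      then have "s \<in> exceeding_prefixes F m x"
        using sy above(3) Ls unfolding exceeding_prefixes_def by blast
      then have "rev s \<le> rev ts" by (rule tsmax)
      moreover have "rev ts < rev s" using rev_less_at_last_diff[OF Lts Ls d(1) above(1) d(2)] .
      ultimately show False by simp
    qed
  qed
  then show ?thesis using noncrossing_snoc_last_diff[OF Lts Ls ne] P d_def by simp
qed

(* Property (b), covering: for m+1 \<le> x \<le> n-1 the cone vertex is an exceeding prefix, so a largest
   one ts exists; ts @ [x] is compatible with F, hence in F, and x is exceeded. *)
lemma nc_exceeded_last_cover: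
  assumes F: "F \<in> maximal_faces (flag_faces (V (Suc m) n) noncrossing)" and m: "0 < m"
    and x: "Suc m \<le> x" "x \<le> n - 1"
  shows "\<exists>t x'. t @ [x] \<in> F \<and> t @ [x'] \<in> F \<and> x < x'"
proof -
  have Ff: "F \<in> flag_faces (V (Suc m) n) noncrossing" using maximal_faceD[OF F] .
  have FV: "F \<subseteq> V (Suc m) n" using flag_faceD(1)[OF Ff] .
  have "[1..<Suc m] @ [n] \<in> F" using nc_cone_vertex_in_face[OF F] x by simp
  then have t0C: "[1..<Suc m] \<in> exceeding_prefixes F m x"
    using x unfolding exceeding_prefixes_def by (auto simp del: upt_Suc)
  have finC: "finite (exceeding_prefixes F m x)"
    using finite_exceeding_prefixes[OF finite_subset[OF FV finite_V]] .
  obtain ts where tsC: "ts \<in> exceeding_prefixes F m x"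
    and tsmax: "\<And>s. s \<in> exceeding_prefixes F m x \<Longrightarrow> rev s \<le> rev ts"
    using finite_obtain_max[OF finC t0C, of rev] by blast
  obtain x' where tsx': "ts @ [x'] \<in> F" "x < x'" and tsx: "\<forall>i<m. ts ! i < x" and Lts: "length ts = m"
    using tsC unfolding exceeding_prefixes_def by blast
  have tsV: "ts \<in> V m (n - 1)" using V_snocD(1) tsx' FV by blast
  have tsxV: "ts @ [x] \<in> V (Suc m) n" using V_snocI[OF tsV] tsx x by simp
  have "ts @ [x] \<in> F"
  proof (rule maximal_face_insert[OF F tsxV])
    fix I assume "I \<in> F"
    then have I: "I = butlast I @ [last I]" "length I = Suc m"
      using FV V_butlast_last V_length by blast+
    then have "noncrossing (ts @ [x]) I"
      using nc_max_exceeding_prefix[OF Ff m tsC tsmax, of "butlast I" "last I"] \<open>I \<in> F\<close> by simp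
    moreover have "length (ts @ [x]) = length I" using I(2) Lts by simp
    ultimately show "noncrossing (ts @ [x]) I \<and> noncrossing I (ts @ [x])"
      using noncrossing_sym by blast
  qed
  then show ?thesis using tsx' by blast
qed

interpretation NC: deletion_complex noncrossing
proof unfold_locales
  fix n I J assume "I \<in> V 1 n" "J \<in> V 1 n"
  then show "noncrossing I J" by (simp add: noncrossing_def V_def)
next
  fix m n F t x s y
  assume "F \<in> flag_faces (V (Suc m) n) noncrossing" "t @ [x] \<in> F" "s @ [y] \<in> F" "t \<noteq> s"
  then show "noncrossing t s" using nc_face_snoc by blast
next
  fix m n F s
  assume "F \<in> flag_faces (V (Suc m) n) noncrossing" "0 < m" "s \<in> V m (n - 1)" "s \<notin> butlast ` F"
    and "\<And>t. t \<in> butlast ` F \<Longrightarrow> noncrossing s t \<and> noncrossing t s"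
  then show "\<exists>y. s @ [y] \<in> V (Suc m) n \<and> (\<forall>I\<in>F. noncrossing (s @ [y]) I \<and> noncrossing I (s @ [y]))"
    by (intro nc_extend_prefix) auto
next
  fix m n F t x x' s y'
  assume "F \<in> flag_faces (V (Suc m) n) noncrossing" "t @ [x] \<in> F" "t @ [x'] \<in> F" "x < x'"
    "s @ [x] \<in> F" "s @ [y'] \<in> F" "x < y'"
  then show "t = s" by (rule nc_exceeded_last_inj)
next
  fix m n F x
  assume "F \<in> maximal_faces (flag_faces (V (Suc m) n) noncrossing)" "0 < m" "Suc m \<le> x" "x \<le> n - 1"
  then show "\<exists>t x'. t @ [x] \<in> F \<and> t @ [x'] \<in> F \<and> x < x'" by (rule nc_exceeded_last_cover)
qed

subsection \<open>The nonnesting complex\<close>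

definition cw_le :: "nat list \<Rightarrow> nat list \<Rightarrow> bool" where
  "cw_le I J \<longleftrightarrow> (\<forall>i<length I. I ! i \<le> J ! i)"

lemma nonnesting_iff_cw_comparable:
  assumes I: "I \<in> V k n" and J: "J \<in> V k n"
  shows "nonnesting I J \<longleftrightarrow> cw_le I J \<or> cw_le J I"
proof
  assume H: "nonnesting I J"
  show "cw_le I J \<or> cw_le J I"
  proof (rule ccontr)
    assume "\<not> (cw_le I J \<or> cw_le J I)"
    then obtain a b where a: "a < k" "J ! a < I ! a" and b: "b < k" "I ! b < J ! b"
      using V_length[OF I] V_length[OF J] unfolding cw_le_def by (auto simp: not_le)
    consider "a < b" | "b < a" | "a = b" by linarith
    then show False
    proof cases
      case 1
      have "I ! a < I ! b" using V_strict_mono[OF I 1 b(1)] .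
      then have "arcs_nest (I ! a) (I ! b) (J ! a) (J ! b)" using a b unfolding arcs_nest_def by auto
      then show False using H 1 b V_length[OF I] unfolding nonnesting_def by auto
    next
      case 2
      have "J ! b < J ! a" using V_strict_mono[OF J 2 a(1)] .
      then have "arcs_nest (I ! b) (I ! a) (J ! b) (J ! a)" using a b unfolding arcs_nest_def by auto
      then show False using H 2 a V_length[OF I] unfolding nonnesting_def by auto
    next
      case 3
      then show False using a b by simp
    qed
  qed
next
  assume H: "cw_le I J \<or> cw_le J I"
  show "nonnesting I J" unfolding nonnesting_def
  proof (intro allI impI)
    fix a b assume ab: "a < b \<and> b < length I"
    then have "a < length J" "b < length J" using V_length[OF I] V_length[OF J] by auto
    then have "(I ! a \<le> J ! a \<and> I ! b \<le> J ! b) \<or> (J ! a \<le> I ! a \<and> J ! b \<le> I ! b)"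
      using H ab unfolding cw_le_def by auto
    then show "\<not> arcs_nest (I ! a) (I ! b) (J ! a) (J ! b)" unfolding arcs_nest_def by auto
  qed
qed

lemma cw_le_snoc:
  assumes "length t = length s"
  shows "cw_le (t @ [x]) (s @ [y]) \<longleftrightarrow> cw_le t s \<and> x \<le> y"
  unfolding cw_le_def
proof
  assume H: "\<forall>i<length (t @ [x]). (t @ [x]) ! i \<le> (s @ [y]) ! i"
  have "t ! i \<le> s ! i" if "i < length t" for i using H[rule_format, of i] that assms by (simp add: nth_append)
  moreover have "x \<le> y" using H[rule_format, of "length t"] assms by (simp add: nth_append)
  ultimately show "(\<forall>i<length t. t ! i \<le> s ! i) \<and> x \<le> y" by simp
next
  assume H: "(\<forall>i<length t. t ! i \<le> s ! i) \<and> x \<le> y"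
  show "\<forall>i<length (t @ [x]). (t @ [x]) ! i \<le> (s @ [y]) ! i"
  proof (intro allI impI)
    fix i assume "i < length (t @ [x])"
    then consider "i < length t" | "i = length t" by fastforce
    then show "(t @ [x]) ! i \<le> (s @ [y]) ! i" using H assms by cases (auto simp: nth_append)
  qed
qed

lemma cw_le_snoc_same: "cw_le (t @ [x]) (t @ [y]) \<longleftrightarrow> x \<le> y"
proof -
  have "cw_le t t" by (simp add: cw_le_def)
  then show ?thesis using cw_le_snoc[of t t x y] by simp
qed

lemma cw_le_antisym: "length t = length s \<Longrightarrow> cw_le t s \<Longrightarrow> cw_le s t \<Longrightarrow> t = s"
  unfolding cw_le_def by (intro nth_equalityI) (auto intro: antisym)

lemma cw_le_trans: "length t = length s \<Longrightarrow> cw_le t s \<Longrightarrow> cw_le s r \<Longrightarrow> cw_le t r"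
  unfolding cw_le_def using le_trans by metis

lemma rev_less_of_cw_le:
  assumes L: "length t = length s" and le: "cw_le t s" and ne: "t \<noteq> s"
  shows "rev t < rev s"
proof -
  define d where "d = last_diff t s"
  have d: "d < length t" "t ! d \<noteq> s ! d" "\<And>l. d < l \<Longrightarrow> l < length t \<Longrightarrow> t ! l = s ! l"
    using last_diff[OF L ne] d_def by auto
  then have "t ! d < s ! d" using le unfolding cw_le_def by (simp add: order.strict_iff_order)
  then show ?thesis using rev_less_at_last_diff[OF refl L[symmetric] d(1)] d(3) by blast
qed

lemma nn_face_snoc:
  assumes F: "F \<in> flag_faces (V (Suc m) n) nonnesting"
    and t: "t @ [x] \<in> F" and s: "s @ [y] \<in> F" and ne: "t @ [x] \<noteq> s @ [y]"
  shows "(cw_le t s \<and> x \<le> y) \<or> (cw_le s t \<and> y \<le> x)"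
proof -
  have FV: "F \<subseteq> V (Suc m) n" using flag_faceD(1)[OF F] .
  then have "t @ [x] \<in> V (Suc m) n" "s @ [y] \<in> V (Suc m) n" using t s by auto
  moreover have "nonnesting (t @ [x]) (s @ [y])" using flag_faceD(2)[OF F t s ne] .
  ultimately have "cw_le (t @ [x]) (s @ [y]) \<or> cw_le (s @ [y]) (t @ [x])"
    using nonnesting_iff_cw_comparable by blast
  moreover have "length t = length s" using t s FV V_snoc_prefix_length by (metis subsetD)
  ultimately show ?thesis using cw_le_snoc by metis
qed

lemma nn_maximal_face_insert:
  assumes F: "F \<in> maximal_faces (flag_faces (V (Suc m) n) nonnesting)"
    and zV: "z \<in> V (Suc m) n"
    and cmp: "\<And>I. I \<in> F \<Longrightarrow> I \<noteq> z \<Longrightarrow> cw_le z I \<or> cw_le I z"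
  shows "z \<in> F"
proof (rule maximal_face_insert[OF F zV])
  fix I assume I: "I \<in> F" "I \<noteq> z"
  then have IV: "I \<in> V (Suc m) n" using flag_faceD(1)[OF maximal_faceD[OF F]] by auto
  show "nonnesting z I \<and> nonnesting I z"
    using nonnesting_iff_cw_comparable[OF zV IV] nonnesting_iff_cw_comparable[OF IV zV] cmp[OF I]
    by blast
qed

lemma nn_exceeded_last_inj:
  assumes F: "F \<in> flag_faces (V (Suc m) n) nonnesting"
    and tx: "t @ [x] \<in> F" and tx': "t @ [x'] \<in> F" and "x < x'"
    and sx: "s @ [x] \<in> F" and sy: "s @ [y'] \<in> F" and "x < y'"
  shows "t = s"
proof (rule ccontr)
  assume ne: "t \<noteq> s"
  have FV: "F \<subseteq> V (Suc m) n" using flag_faceD(1)[OF F] .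
  have L: "length t = length s" using tx sx FV V_snoc_prefix_length by (metis subsetD)
  have "(cw_le t s \<and> x' \<le> x) \<or> (cw_le s t \<and> x \<le> x')" using nn_face_snoc[OF F tx' sx] ne by simp
  moreover have "(cw_le t s \<and> x \<le> y') \<or> (cw_le s t \<and> y' \<le> x)" using nn_face_snoc[OF F tx sy] ne by simp
  ultimately have "cw_le s t" "cw_le t s" using \<open>x < x'\<close> \<open>x < y'\<close> by auto
  then show False using cw_le_antisym L ne by metis
qed

lemma nn_last_entry_mono:
  assumes F: "F \<in> flag_faces (V (Suc m) n) nonnesting"
    and t': "t' @ [a] \<in> F" "cw_le t' s" and t: "t @ [x] \<in> F" "\<not> cw_le t s"
  shows "a \<le> x"
proof -
  have FV: "F \<subseteq> V (Suc m) n" using flag_faceD(1)[OF F] .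
  have "length t = length t'" using t(1) t'(1) FV V_snoc_prefix_length by (metis subsetD)
  then have "\<not> cw_le t t'" using cw_le_trans[of t t' s] t' t(2) by auto
  moreover have "t' \<noteq> t" using t' t(2) by auto
  ultimately show "a \<le> x" using nn_face_snoc[OF F t'(1) t(1)] by auto
qed

(* Property (a), extension: a prefix s comparable with all prefixes of a face is extended by the
   largest last entry of the vertices whose prefix is below s (or just above the entries of s). *)
lemma nn_extend_prefix:
  assumes F: "F \<in> flag_faces (V (Suc m) n) nonnesting" and m: "0 < m"
    and sV: "s \<in> V m (n - 1)" and sT: "s \<notin> butlast ` F"
    and comp: "\<And>t. t \<in> butlast ` F \<Longrightarrow> nonnesting s t"
  shows "\<exists>y. s @ [y] \<in> V (Suc m) n \<and> (\<forall>I\<in>F. nonnesting (s @ [y]) I \<and> nonnesting I (s @ [y]))"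
proof -
  have FV: "F \<subseteq> V (Suc m) n" using flag_faceD(1)[OF F] .
  have fin: "finite F" using finite_subset[OF FV finite_V] .
  have Ls: "length s = m" using V_length[OF sV] .
  have comparable: "cw_le t s \<or> cw_le s t" if "t \<in> butlast ` F" for t
    using comp[OF that] nonnesting_iff_cw_comparable[OF sV] butlast_image_V[OF FV] that by blast
  define X where "X = insert (Suc (s ! (m - 1))) {x. \<exists>t. t @ [x] \<in> F \<and> cw_le t s}"
  have "{x. \<exists>t. t @ [x] \<in> F \<and> cw_le t s} \<subseteq> last ` F" by force
  then have finX: "finite X" unfolding X_def using fin finite_surj by blast
  define y where "y = Max X"
  have Xn: "a \<le> n" if "a \<in> X" for a
  proof -
    have "s ! (m - 1) \<le> n - 1" "1 \<le> s ! (m - 1)" using V_entry_range[OF sV, of "m - 1"] m by auto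
    moreover have "a \<le> n" if "t @ [a] \<in> F" for t using that FV V_snocD(4)[of t a m n] by auto
    ultimately show ?thesis using \<open>a \<in> X\<close> unfolding X_def by auto
  qed
  have yn: "y \<le> n" unfolding y_def using finX Xn by (simp add: X_def)
  have ys: "Suc (s ! (m - 1)) \<le> y" unfolding y_def using finX by (simp add: X_def)
  have sy: "\<And>i. i < m \<Longrightarrow> s ! i < y" using V_below_last[OF sV] ys by simp
  have syV: "s @ [y] \<in> V (Suc m) n" using V_snocI[OF sV sy _ yn] ys by simp
  have main: "cw_le (s @ [y]) (t @ [x]) \<or> cw_le (t @ [x]) (s @ [y])" if tx: "t @ [x] \<in> F" for t x
  proof -
    have Lt: "length t = m" using tx FV V_snoc_prefix_length by blast
    show ?thesis
    proof (cases "cw_le t s")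
      case True
      then have "x \<in> X" unfolding X_def using tx by blast
      then have "x \<le> y" unfolding y_def using finX by simp
      then show ?thesis using True cw_le_snoc Lt Ls by metis
    next
      case False
      then have st: "cw_le s t" using comparable tx by force
      have "a \<le> x" if "a \<in> X" for a
      proof -
        have "s ! (m - 1) \<le> t ! (m - 1)" using st Ls m unfolding cw_le_def by simp
        moreover have "t ! (m - 1) < x" using V_snocD(2)[of t x m n "m - 1"] tx FV m by auto
        moreover have "a \<le> x" if "t' @ [a] \<in> F" "cw_le t' s" for t'
          using nn_last_entry_mono[OF F that tx False] .
        ultimately show ?thesis using \<open>a \<in> X\<close> unfolding X_def by auto
      qed
      then have "y \<le> x" unfolding y_def using finX by (simp add: X_def)
      then show ?thesis using st cw_le_snoc Lt Ls by metis
    qed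
  qed
  have "nonnesting (s @ [y]) I \<and> nonnesting I (s @ [y])" if "I \<in> F" for I
  proof -
    have IV: "I \<in> V (Suc m) n" using that FV by auto
    then have "cw_le (s @ [y]) I \<or> cw_le I (s @ [y])"
      using main[of "butlast I" "last I"] V_butlast_last[OF IV] that by simp
    then show ?thesis
      using nonnesting_iff_cw_comparable[OF syV IV] nonnesting_iff_cw_comparable[OF IV syV] by blast
  qed
  then show ?thesis using syV by blast
qed

(* The bottom vertex (1, ..., m+1) is componentwise below every vertex, so it lies in every
   maximal face. *)
lemma nn_bottom_vertex_in_face:
  assumes F: "F \<in> maximal_faces (flag_faces (V (Suc m) n) nonnesting)" and mn: "Suc m \<le> n"
  shows "[1..<Suc m] @ [Suc m] \<in> F"
proof (rule nn_maximal_face_insert[OF F])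
  show "[1..<Suc m] @ [Suc m] \<in> V (Suc m) n" using mn unfolding V_def by (auto simp: sorted_wrt_append)
  fix I assume "I \<in> F"
  then have IV: "I \<in> V (Suc m) n" using flag_faceD(1)[OF maximal_faceD[OF F]] by auto
  have "([1..<Suc m] @ [Suc m]) ! i \<le> I ! i" if "i < Suc m" for i
    using V_entry_lower[OF IV that] that by (cases "i < m") (auto simp: nth_append simp del: upt_Suc)
  then show "cw_le ([1..<Suc m] @ [Suc m]) I \<or> cw_le I ([1..<Suc m] @ [Suc m])"
    unfolding cw_le_def by (simp del: upt_Suc)
qed

(* If no prefix is exceeding for x, the largest prefix t1 with all entries below x in reverse
   lexicographic order gives a vertex t1 @ [x + 1] comparable with every vertex s @ [y] of F:
   prefixes below t1 have entries below x, hence y \<le> x; prefixes above t1 are not below x,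
   hence y > x. *)
lemma nn_max_prefix_below:
  assumes F: "F \<in> flag_faces (V (Suc m) n) nonnesting"
    and none: "exceeding_prefixes F m x = {}"
    and t1: "t1 @ [y1] \<in> F" "\<forall>i<m. t1 ! i < x"
    and t1max: "\<And>s y. s @ [y] \<in> F \<Longrightarrow> \<forall>i<m. s ! i < x \<Longrightarrow> rev s \<le> rev t1"
    and sy: "s @ [y] \<in> F"
  shows "cw_le (t1 @ [Suc x]) (s @ [y]) \<or> cw_le (s @ [y]) (t1 @ [Suc x])"
proof (cases "s = t1")
  case True
  then show ?thesis using cw_le_snoc_same nat_le_linear by metis
next
  case False
  have FV: "F \<subseteq> V (Suc m) n" using flag_faceD(1)[OF F] .
  have Ls: "length s = m" "length t1 = m" using V_snoc_prefix_length sy t1(1) FV by blast+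
  have c: "cw_le s t1 \<or> cw_le t1 s" using nn_face_snoc[OF F sy t1(1)] False by auto
  show ?thesis
  proof (cases "cw_le s t1")
    case True
    have "\<forall>i<m. s ! i < x" using True t1(2) Ls unfolding cw_le_def by (meson le_less_trans)
    then have "y \<le> x" using none sy Ls not_le unfolding exceeding_prefixes_def by blast
    then show ?thesis using True cw_le_snoc Ls by (metis le_Suc_eq)
  next
    case False
    then have t1s: "cw_le t1 s" using c by simp
    have "\<not> rev s \<le> rev t1" using rev_less_of_cw_le[OF _ t1s] Ls \<open>s \<noteq> t1\<close> by fastforce
    then have "\<not> (\<forall>i<m. s ! i < x)" using t1max[OF sy] by blast
    then obtain i where i: "i < m" "x \<le> s ! i" by (auto simp: not_less)
    have "s ! i < y" using V_snocD(2)[of s y m n i] sy FV i by auto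
    then have "Suc x \<le> y" using i by simp
    then show ?thesis using t1s cw_le_snoc Ls by metis
  qed
qed

(* Property (b), covering, first half: exceeding prefixes exist, since otherwise the vertex of
   nn_max_prefix_below would lie in F and make its prefix exceeding (the bottom vertex shows that
   prefixes with all entries below x exist). *)
lemma nn_exceeding_prefix_exists:
  assumes F: "F \<in> maximal_faces (flag_faces (V (Suc m) n) nonnesting)"
    and x: "Suc m \<le> x" "x \<le> n - 1"
  shows "exceeding_prefixes F m x \<noteq> {}"
proof
  assume none: "exceeding_prefixes F m x = {}"
  have Ff: "F \<in> flag_faces (V (Suc m) n) nonnesting" using maximal_faceD[OF F] .
  have FV: "F \<subseteq> V (Suc m) n" using flag_faceD(1)[OF Ff] .
  have fin: "finite F" using finite_subset[OF FV finite_V] .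
  define A where "A = {t. length t = m \<and> (\<forall>i<m. t ! i < x) \<and> (\<exists>y. t @ [y] \<in> F)}"
  have "[1..<Suc m] @ [Suc m] \<in> F" using nn_bottom_vertex_in_face[OF F] x by simp
  then have t0A: "[1..<Suc m] \<in> A" unfolding A_def using x by (auto simp del: upt_Suc)
  have "A \<subseteq> butlast ` F" unfolding A_def by force
  then have finA: "finite A" using fin finite_subset by blast
  obtain t1 where t1A: "t1 \<in> A" and t1max: "\<And>s. s \<in> A \<Longrightarrow> rev s \<le> rev t1"
    using finite_obtain_max[OF finA t0A, of rev] by blast
  obtain y1 where y1: "t1 @ [y1] \<in> F" and t1x: "\<forall>i<m. t1 ! i < x" and Lt1: "length t1 = m"
    using t1A unfolding A_def by blast
  have t1max': "rev s \<le> rev t1" if "s @ [y] \<in> F" "\<forall>i<m. s ! i < x" for s y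
    using t1max that FV V_snoc_prefix_length unfolding A_def by blast
  have t1V: "t1 \<in> V m (n - 1)" using V_snocD(1) y1 FV by blast
  have zV: "t1 @ [Suc x] \<in> V (Suc m) n" by (intro V_snocI[OF t1V]) (use t1x x in auto)
  have "t1 @ [Suc x] \<in> F"
  proof (rule nn_maximal_face_insert[OF F zV])
    fix I assume I: "I \<in> F"
    then have "I = butlast I @ [last I]" using FV V_butlast_last by blast
    then show "cw_le (t1 @ [Suc x]) I \<or> cw_le I (t1 @ [Suc x])"
      using nn_max_prefix_below[OF Ff none y1 t1x t1max', where s = "butlast I" and y = "last I"] I by simp
  qed
  then have "t1 \<in> exceeding_prefixes F m x" using t1x Lt1 y1 unfolding exceeding_prefixes_def by auto
  then show False using none by simp
qed

(* If s is below ts, then y \<le> x, since otherwise s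
   would be a smaller exceeding prefix; if s is above ts, then y is at least the last entry of an
   element of F above ts, which exceeds x. *)
lemma nn_min_exceeding_prefix:
  assumes F: "F \<in> flag_faces (V (Suc m) n) nonnesting"
    and tsC: "ts \<in> exceeding_prefixes F m x"
    and tsmin: "\<And>s. s \<in> exceeding_prefixes F m x \<Longrightarrow> rev ts \<le> rev s"
    and sy: "s @ [y] \<in> F"
  shows "cw_le (ts @ [x]) (s @ [y]) \<or> cw_le (s @ [y]) (ts @ [x])"
proof (cases "s = ts")
  case True
  then show ?thesis using cw_le_snoc_same nat_le_linear by metis
next
  case False
  have FV: "F \<subseteq> V (Suc m) n" using flag_faceD(1)[OF F] .
  obtain x' where tsx': "ts @ [x'] \<in> F" "x < x'" and tsx: "\<forall>i<m. ts ! i < x" and Lts: "length ts = m"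
    using tsC unfolding exceeding_prefixes_def by blast
  have Ls: "length s = m" using V_snoc_prefix_length sy FV by blast
  have c: "(cw_le s ts \<and> y \<le> x') \<or> (cw_le ts s \<and> x' \<le> y)" using nn_face_snoc[OF F sy tsx'(1)] False by auto
  show ?thesis
  proof (cases "cw_le s ts")
    case True
    have "y \<le> x"
    proof (rule ccontr)
      assume "\<not> y \<le> x"
      moreover have "\<forall>i<m. s ! i < x" using True tsx Ls unfolding cw_le_def by (meson le_less_trans)
      ultimately have "s \<in> exceeding_prefixes F m x" unfolding exceeding_prefixes_def using sy Ls by auto
      then have "rev ts \<le> rev s" by (rule tsmin)
      moreover have "rev s < rev ts" using rev_less_of_cw_le[OF _ True False] Ls Lts by simp
      ultimately show False by simp
    qed
    then show ?thesis using True cw_le_snoc Ls Lts by metis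
  next
    case False
    then have "cw_le ts s" "x \<le> y" using c tsx'(2) by auto
    then show ?thesis using cw_le_snoc Ls Lts by metis
  qed
qed

lemma nn_exceeded_last_cover:
  assumes F: "F \<in> maximal_faces (flag_faces (V (Suc m) n) nonnesting)"
    and x: "Suc m \<le> x" "x \<le> n - 1"
  shows "\<exists>t x'. t @ [x] \<in> F \<and> t @ [x'] \<in> F \<and> x < x'"
proof -
  have Ff: "F \<in> flag_faces (V (Suc m) n) nonnesting" using maximal_faceD[OF F] .
  have FV: "F \<subseteq> V (Suc m) n" using flag_faceD(1)[OF Ff] .
  obtain t0 where t0C: "t0 \<in> exceeding_prefixes F m x" using nn_exceeding_prefix_exists[OF F x] by blast
  have finC: "finite (exceeding_prefixes F m x)"
    using finite_exceeding_prefixes[OF finite_subset[OF FV finite_V]] .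
  obtain ts where tsC: "ts \<in> exceeding_prefixes F m x"
    and tsmin: "\<And>s. s \<in> exceeding_prefixes F m x \<Longrightarrow> rev ts \<le> rev s"
    using finite_obtain_min[OF finC t0C, of rev] by blast
  obtain x' where tsx': "ts @ [x'] \<in> F" "x < x'" and tsx: "\<forall>i<m. ts ! i < x"
    using tsC unfolding exceeding_prefixes_def by blast
  have tsV: "ts \<in> V m (n - 1)" using V_snocD(1) tsx' FV by blast
  have zV: "ts @ [x] \<in> V (Suc m) n" using V_snocI[OF tsV] tsx x by simp
  have "ts @ [x] \<in> F"
  proof (rule nn_maximal_face_insert[OF F zV])
    fix I assume I: "I \<in> F"
    then have "I = butlast I @ [last I]" using FV V_butlast_last by blast
    then show "cw_le (ts @ [x]) I \<or> cw_le I (ts @ [x])"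
      using nn_min_exceeding_prefix[OF Ff tsC tsmin, of "butlast I" "last I"] I by simp
  qed
  then show ?thesis using tsx' by blast
qed

interpretation NN: deletion_complex nonnesting
proof unfold_locales
  fix n I J assume "I \<in> V 1 n" "J \<in> V 1 n"
  then show "nonnesting I J" by (simp add: nonnesting_def V_def)
next
  fix m n F t x s y
  assume F: "F \<in> flag_faces (V (Suc m) n) nonnesting" and "t @ [x] \<in> F" "s @ [y] \<in> F" "t \<noteq> s"
  then have "cw_le t s \<or> cw_le s t" using nn_face_snoc[OF F] by blast
  moreover have "t \<in> V m (n - 1)" "s \<in> V m (n - 1)"
    using \<open>t @ [x] \<in> F\<close> \<open>s @ [y] \<in> F\<close> flag_faceD(1)[OF F] V_snocD(1) by blast+
  ultimately show "nonnesting t s" using nonnesting_iff_cw_comparable by blast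
next
  fix m n F s
  assume "F \<in> flag_faces (V (Suc m) n) nonnesting" "0 < m" "s \<in> V m (n - 1)" "s \<notin> butlast ` F"
    and "\<And>t. t \<in> butlast ` F \<Longrightarrow> nonnesting s t \<and> nonnesting t s"
  then show "\<exists>y. s @ [y] \<in> V (Suc m) n \<and> (\<forall>I\<in>F. nonnesting (s @ [y]) I \<and> nonnesting I (s @ [y]))"
    by (intro nn_extend_prefix) auto
next
  fix m n F t x x' s y'
  assume "F \<in> flag_faces (V (Suc m) n) nonnesting" "t @ [x] \<in> F" "t @ [x'] \<in> F" "x < x'"
    "s @ [x] \<in> F" "s @ [y'] \<in> F" "x < y'"
  then show "t = s" by (rule nn_exceeded_last_inj)
next
  fix m n F x
  assume "F \<in> maximal_faces (flag_faces (V (Suc m) n) nonnesting)" "0 < m" "Suc m \<le> x" "x \<le> n - 1"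
  then show "\<exists>t x'. t @ [x] \<in> F \<and> t @ [x'] \<in> F \<and> x < x'" by (intro nn_exceeded_last_cover)
qed

theorem corollary2p11:
  fixes k n :: nat
  assumes "1 \<le> k" and "k \<le> n - 1"
  shows "(\<forall>F\<in>maximal_faces (NN_complex k n). finite F \<and> card F = k * (n - k) + 1)
       \<and> (\<forall>F\<in>maximal_faces (NC_complex k n). finite F \<and> card F = k * (n - k) + 1)"
proof -
  have "k < n" using assms by linarith
  then show ?thesis
    unfolding NN_complex_def NC_complex_def
    using NN.maximal_face_card NC.maximal_face_card assms(1) by blast
qed

end
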